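(* Let $X$ be a well-filtered space such that its Smyth power space $P_S(X)$ is first-countable. Then the upper Vietoris topology and the Scott topology on $\mathsf{K}(X)$ coincide.
   Context: All spaces are $T_0$; the specialization order is $x\le y$ iff $x\in\overline{\{y\}}$, and saturated sets are the upper sets in this order. $\mathsf{K}(X)$ is the set of nonempty compact saturated subsets of $X$ ordered by reverse inclusion; a family in $\mathsf{K}(X)$ has a supremum iff its intersection lies in $\mathsf{K}(X)$, and then the supremum is the intersection. The Scott topology on a poset $Q$ consists of upper sets $U$ such that every directed $D$ whose supremum exists and lies in $U$ meets $U$. For open $U\subseteq X$, $\Box U=\{K\in\mathsf{K}(X):K\subseteq U\}$; the upper Vietoris topology on $\mathsf{K}(X)$ has base $\{\Box U: U\text{ open}\}$, and the resulting space is the Smyth power space $P_S(X)$. $X$ is well-filtered if for every open $U$ and every family $\mathcal K\subseteq\mathsf{K}(X)$ filtered under inclusion, $\bigcap\mathcal K\subseteq U$ implies $K\subseteq U$ for some $K\in\mathcal K$. *)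

theory Defs
  imports "HOL-Analysis.Analysis"
begin

definition spec_le :: "'a topology \<Rightarrow> 'a \<Rightarrow> 'a \<Rightarrow> bool" where
  "spec_le X x y \<longleftrightarrow> x \<in> topspace X \<and> y \<in> topspace X \<and> x \<in> X closure_of {y}"

definition saturated :: "'a topology \<Rightarrow> 'a set \<Rightarrow> bool" where
  "saturated X A \<longleftrightarrow> A \<subseteq> topspace X \<and>
     (\<forall>x\<in>A. \<forall>y\<in>topspace X. spec_le X x y \<longrightarrow> y \<in> A)"

definition Kset :: "'a topology \<Rightarrow> 'a set set" where
  "Kset X = {K. K \<noteq> {} \<and> compactin X K \<and> saturated X K}"

definition box :: "'a topology \<Rightarrow> 'a set \<Rightarrow> 'a set set" where
  "box X U = {K \<in> Kset X. K \<subseteq> U}"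

definition smyth_power :: "'a topology \<Rightarrow> 'a set topology" where
  "smyth_power X = topology_generated_by {box X U | U. openin X U}"

definition well_filtered :: "'a topology \<Rightarrow> bool" where
  "well_filtered X \<longleftrightarrow>
     (\<forall>U \<KK>. openin X U \<and> \<KK> \<subseteq> Kset X \<and> \<KK> \<noteq> {} \<and>
        (\<forall>A\<in>\<KK>. \<forall>B\<in>\<KK>. \<exists>C\<in>\<KK>. C \<subseteq> A \<and> C \<subseteq> B) \<and>
        \<Inter>\<KK> \<subseteq> U \<longrightarrow> (\<exists>K\<in>\<KK>. K \<subseteq> U))"

definition directed_in :: "('b \<Rightarrow> 'b \<Rightarrow> bool) \<Rightarrow> 'b set \<Rightarrow> bool" where
  "directed_in le D \<longleftrightarrow> D \<noteq> {} \<and> (\<forall>a\<in>D. \<forall>b\<in>D. \<exists>c\<in>D. le a c \<and> le b c)"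

definition is_sup_in :: "'b set \<Rightarrow> ('b \<Rightarrow> 'b \<Rightarrow> bool) \<Rightarrow> 'b set \<Rightarrow> 'b \<Rightarrow> bool" where
  "is_sup_in P le D s \<longleftrightarrow> s \<in> P \<and> (\<forall>d\<in>D. le d s) \<and>
     (\<forall>u\<in>P. (\<forall>d\<in>D. le d u) \<longrightarrow> le s u)"

definition scott_open :: "'b set \<Rightarrow> ('b \<Rightarrow> 'b \<Rightarrow> bool) \<Rightarrow> 'b set \<Rightarrow> bool" where
  "scott_open P le U \<longleftrightarrow> U \<subseteq> P \<and>
     (\<forall>x\<in>U. \<forall>y\<in>P. le x y \<longrightarrow> y \<in> U) \<and>
     (\<forall>D s. D \<subseteq> P \<and> directed_in le D \<and> is_sup_in P le D s \<and> s \<in> U \<longrightarrow> D \<inter> U \<noteq> {})"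

definition scott_topology :: "'b set \<Rightarrow> ('b \<Rightarrow> 'b \<Rightarrow> bool) \<Rightarrow> 'b topology" where
  "scott_topology P le = topology (scott_open P le)"

end

theory Submission
  imports Defs
begin

text \<open>
  Boxes of open sets are Scott open because, by well-filteredness, a filtered family in
  \<open>K(X)\<close> has its intersection as supremum and enters every box containing it.
  Conversely let \<open>\<V>\<close> be Scott open and \<open>K \<in> \<V>\<close>. A countable neighbourhood base of
  \<open>K\<close> in \<open>P\<^sub>S(X)\<close> yields decreasing open sets \<open>W\<^sub>n \<supseteq> K\<close> eventually inside every open
  \<open>O \<supseteq> K\<close>. If no \<open>\<box>W\<^sub>n\<close> were contained in \<open>\<V>\<close>, pick \<open>K\<^sub>n \<in> \<box>W\<^sub>n - \<V>\<close>. The sets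
  \<open>L\<^sub>n = K \<union> \<Union>\<^sub>m\<^sub>\<ge>\<^sub>n K\<^sub>m\<close> are compact (the \<open>K\<^sub>m\<close> converge to \<open>K\<close>) and saturated,
  decrease, and intersect to \<open>K\<close> because \<open>K\<close> is saturated. So \<open>K = sup L\<^sub>n\<close>, some
  \<open>L\<^sub>n\<close> lies in \<open>\<V>\<close>, and so does \<open>K\<^sub>n \<subseteq> L\<^sub>n\<close>: a contradiction.
\<close>

lemma spec_le_iff_open:
  "spec_le X x y \<longleftrightarrow>
     x \<in> topspace X \<and> y \<in> topspace X \<and> (\<forall>U. openin X U \<and> x \<in> U \<longrightarrow> y \<in> U)"
  unfolding spec_le_def in_closure_of by auto

lemma saturated_Union: "(\<And>S. S \<in> \<F> \<Longrightarrow> saturated X S) \<Longrightarrow> saturated X (\<Union>\<F>)"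
  unfolding saturated_def by blast

lemma saturated_disjoint_closure_of:
  assumes "saturated X K" "x \<notin> K"
  shows "K \<inter> X closure_of {x} = {}"
proof -
  have "x \<in> K" if "k \<in> K" "k \<in> X closure_of {x}" for k
  proof -
    have "x \<in> topspace X"
      using that(2) unfolding in_closure_of by blast
    with assms(1) that show ?thesis
      unfolding saturated_def spec_le_def by blast
  qed
  with assms(2) show ?thesis
    by blast
qed

definition principal_upset :: "'a topology \<Rightarrow> 'a \<Rightarrow> 'a set" where
  "principal_upset X x = {y \<in> topspace X. spec_le X x y}"

lemma principal_upset_subset_open:
  "openin X U \<Longrightarrow> x \<in> U \<Longrightarrow> principal_upset X x \<subseteq> U"
  by (auto simp: principal_upset_def spec_le_iff_open)

lemma principal_upset_in_Kset:
  assumes "x \<in> topspace X"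
  shows "principal_upset X x \<in> Kset X"
proof -
  have x: "x \<in> principal_upset X x"
    using assms by (auto simp: principal_upset_def spec_le_iff_open)
  have "compactin X (principal_upset X x)"
    unfolding compactin_def
  proof (intro conjI allI impI)
    fix \<U> assume \<U>: "(\<forall>U\<in>\<U>. openin X U) \<and> principal_upset X x \<subseteq> \<Union>\<U>"
    then obtain U where "U \<in> \<U>" "x \<in> U"
      using x by blast
    with \<U> show "\<exists>\<F>. finite \<F> \<and> \<F> \<subseteq> \<U> \<and> principal_upset X x \<subseteq> \<Union>\<F>"
      using principal_upset_subset_open[of X U x] by (intro exI[of _ "{U}"]) auto
  qed (auto simp: principal_upset_def)
  moreover have "saturated X (principal_upset X x)"
    unfolding saturated_def principal_upset_def spec_le_iff_open by auto
  ultimately show ?thesis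
    using x by (auto simp: Kset_def)
qed

lemma box_subset_imp_subset:
  assumes "openin X W" "box X W \<subseteq> box X G"
  shows "W \<subseteq> G"
proof
  fix x assume x: "x \<in> W"
  then have "x \<in> topspace X"
    using assms(1) openin_subset by blast
  then have "principal_upset X x \<in> box X W"
    using principal_upset_in_Kset principal_upset_subset_open[OF assms(1) x] by (auto simp: box_def)
  then have "principal_upset X x \<subseteq> G"
    using assms(2) by (auto simp: box_def)
  with \<open>x \<in> topspace X\<close> show "x \<in> G"
    by (auto simp: principal_upset_def spec_le_iff_open)
qed

lemma compactin_Un_tails:
  assumes K: "compactin X K" and C: "\<And>m. compactin X (C m)"
    and conv: "\<And>G. openin X G \<Longrightarrow> K \<subseteq> G \<Longrightarrow> \<forall>\<^sub>F m in sequentially. C m \<subseteq> G"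
  shows "compactin X (K \<union> \<Union>(C ` {n..}))"
  unfolding compactin_def
proof (intro conjI allI impI)
  show "K \<union> \<Union>(C ` {n..}) \<subseteq> topspace X"
    using K C by (auto simp: compactin_def)
  fix \<U> assume \<U>: "(\<forall>U\<in>\<U>. openin X U) \<and> K \<union> \<Union>(C ` {n..}) \<subseteq> \<Union>\<U>"
  then have open_\<U>: "\<And>U. U \<in> \<U> \<Longrightarrow> openin X U"
    by blast
  have "K \<subseteq> \<Union>\<U>"
    using \<U> by blast
  obtain \<F>\<^sub>0 where \<F>\<^sub>0: "finite \<F>\<^sub>0" "\<F>\<^sub>0 \<subseteq> \<U>" "K \<subseteq> \<Union>\<F>\<^sub>0"
    using compactinD[OF K open_\<U> \<open>K \<subseteq> \<Union>\<U>\<close>] by auto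
  have "openin X (\<Union>\<F>\<^sub>0)"
    using \<F>\<^sub>0(2) open_\<U> by (intro openin_Union) blast
  then obtain N where N: "\<And>m. m \<ge> N \<Longrightarrow> C m \<subseteq> \<Union>\<F>\<^sub>0"
    using conv[OF _ \<F>\<^sub>0(3)] unfolding eventually_sequentially by blast
  have initial_compact: "compactin X (\<Union>(C ` {n..<N}))"
    using C by (intro compactin_Union) auto
  have initial_cover: "\<Union>(C ` {n..<N}) \<subseteq> \<Union>\<U>"
    using \<U> by (auto 0 4)
  obtain \<F>\<^sub>1 where \<F>\<^sub>1: "finite \<F>\<^sub>1" "\<F>\<^sub>1 \<subseteq> \<U>" "\<Union>(C ` {n..<N}) \<subseteq> \<Union>\<F>\<^sub>1"
    using compactinD[OF initial_compact open_\<U> initial_cover] by auto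
  have "C m \<subseteq> \<Union>(\<F>\<^sub>0 \<union> \<F>\<^sub>1)" if "m \<ge> n" for m
  proof (cases "m < N")
    case True
    with that have "C m \<subseteq> \<Union>(C ` {n..<N})"
      by auto
    with \<F>\<^sub>1(3) show ?thesis
      by blast
  next
    case False
    with N have "C m \<subseteq> \<Union>\<F>\<^sub>0"
      by simp
    then show ?thesis
      by blast
  qed
  then have "\<Union>(C ` {n..}) \<subseteq> \<Union>(\<F>\<^sub>0 \<union> \<F>\<^sub>1)"
    by (intro UN_least) simp
  with \<F>\<^sub>0 \<F>\<^sub>1 show "\<exists>\<F>. finite \<F> \<and> \<F> \<subseteq> \<U> \<and> K \<union> \<Union>(C ` {n..}) \<subseteq> \<Union>\<F>"
    by (intro exI[of _ "\<F>\<^sub>0 \<union> \<F>\<^sub>1"]) blast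
qed

lemma Inter_Un_tails_eq_saturated:
  assumes K: "saturated X K"
    and conv: "\<And>G. openin X G \<Longrightarrow> K \<subseteq> G \<Longrightarrow> \<forall>\<^sub>F m in sequentially. C m \<subseteq> G"
  shows "(\<Inter>n. K \<union> \<Union>(C ` {n..})) = K"
proof (rule antisym)
  show "(\<Inter>n. K \<union> \<Union>(C ` {n..})) \<subseteq> K"
  proof
    fix x assume x: "x \<in> (\<Inter>n. K \<union> \<Union>(C ` {n..}))"
    show "x \<in> K"
    proof (rule ccontr)
      assume "x \<notin> K"
      define G where "G = topspace X - X closure_of {x}"
      have "K \<subseteq> G"
        using saturated_disjoint_closure_of[OF K \<open>x \<notin> K\<close>] K by (auto simp: G_def saturated_def)
      moreover have "openin X G"
        by (simp add: G_def openin_diff closedin_closure_of)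
      ultimately obtain N where N: "\<And>m. m \<ge> N \<Longrightarrow> C m \<subseteq> G"
        using conv unfolding eventually_sequentially by blast
      from x \<open>x \<notin> K\<close> obtain m where "m \<ge> N" "x \<in> C m"
        by blast
      then have "x \<in> G"
        using N by blast
      then show False
        using closure_of_subset[of "{x}" X] by (auto simp: G_def)
    qed
  qed
qed blast

lemma is_sup_in_Kset_iff:
  assumes "\<Inter>\<K> \<in> Kset X"
  shows "is_sup_in (Kset X) (\<lambda>A B. B \<subseteq> A) \<K> K \<longleftrightarrow> K = \<Inter>\<K>"
  using assms unfolding is_sup_in_def by blast

lemma well_filteredD:
  assumes "well_filtered X" "openin X U" "\<K> \<subseteq> Kset X" "directed_in (\<lambda>A B. B \<subseteq> A) \<K>"
    and "\<Inter>\<K> \<subseteq> U"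
  shows "\<exists>K\<in>\<K>. K \<subseteq> U"
  using assms unfolding well_filtered_def directed_in_def by blast

lemma Kset_Inter_directed:
  assumes wf: "well_filtered X" and \<K>: "\<K> \<subseteq> Kset X" "directed_in (\<lambda>A B. B \<subseteq> A) \<K>"
  shows "\<Inter>\<K> \<in> Kset X"
proof -
  obtain K\<^sub>0 where K\<^sub>0: "K\<^sub>0 \<in> \<K>"
    using \<K>(2) unfolding directed_in_def by blast
  have "\<Inter>\<K> \<noteq> {}"
    using well_filteredD[OF wf openin_empty \<K>] \<K>(1) by (auto simp: Kset_def)
  moreover have "compactin X (\<Inter>\<K>)"
    unfolding compactin_def
  proof (intro conjI allI impI)
    show "\<Inter>\<K> \<subseteq> topspace X"
      using K\<^sub>0 \<K>(1) compactin_subset_topspace unfolding Kset_def by blast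
    fix \<U> assume \<U>: "(\<forall>U\<in>\<U>. openin X U) \<and> \<Inter>\<K> \<subseteq> \<Union>\<U>"
    then have "openin X (\<Union>\<U>)"
      by (intro openin_Union) blast
    then obtain K where K: "K \<in> \<K>" "K \<subseteq> \<Union>\<U>"
      using well_filteredD[OF wf _ \<K>] \<U> by blast
    then have "compactin X K"
      using \<K>(1) by (auto simp: Kset_def)
    then obtain \<F> where "finite \<F>" "\<F> \<subseteq> \<U>" "K \<subseteq> \<Union>\<F>"
      using compactinD[of X K \<U>] \<U> K(2) by blast
    with K(1) show "\<exists>\<F>. finite \<F> \<and> \<F> \<subseteq> \<U> \<and> \<Inter>\<K> \<subseteq> \<Union>\<F>"
      by blast
  qed
  moreover have "saturated X (\<Inter>\<K>)"
    using K\<^sub>0 \<K>(1) unfolding saturated_def Kset_def by blast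
  ultimately show ?thesis
    by (simp add: Kset_def)
qed

lemma scott_open_subset: "scott_open P le U \<Longrightarrow> U \<subseteq> P"
  by (simp add: scott_open_def)

lemma scott_open_upward:
  "scott_open P le U \<Longrightarrow> x \<in> U \<Longrightarrow> y \<in> P \<Longrightarrow> le x y \<Longrightarrow> y \<in> U"
  unfolding scott_open_def by blast

lemma scott_open_meets_directed:
  "scott_open P le U \<Longrightarrow> D \<subseteq> P \<Longrightarrow> directed_in le D \<Longrightarrow> is_sup_in P le D s \<Longrightarrow> s \<in> U
    \<Longrightarrow> D \<inter> U \<noteq> {}"
  unfolding scott_open_def by blast

lemma scott_open_Int:
  assumes S: "scott_open P le S" and T: "scott_open P le T"
  shows "scott_open P le (S \<inter> T)"
  unfolding scott_open_def
proof (intro conjI allI impI)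
  fix D s assume D: "D \<subseteq> P \<and> directed_in le D \<and> is_sup_in P le D s \<and> s \<in> S \<inter> T"
  then obtain a b where a: "a \<in> D" "a \<in> S" and b: "b \<in> D" "b \<in> T"
    using scott_open_meets_directed[OF S, of D s] scott_open_meets_directed[OF T, of D s] by blast
  then obtain c where c: "c \<in> D" "le a c" "le b c"
    using D unfolding directed_in_def by blast
  with D have "c \<in> S" "c \<in> T"
    using scott_open_upward[OF S a(2)] scott_open_upward[OF T b(2)] by blast+
  with c(1) show "D \<inter> (S \<inter> T) \<noteq> {}"
    by blast
qed (use S T in \<open>auto simp: scott_open_def\<close>)

lemma scott_open_Union:
  assumes \<K>: "\<forall>S\<in>\<K>. scott_open P le S"
  shows "scott_open P le (\<Union>\<K>)"
  unfolding scott_open_def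
proof (intro conjI allI impI)
  show "\<Union>\<K> \<subseteq> P"
    using \<K> by (auto simp: scott_open_def)
  show "\<forall>x\<in>\<Union>\<K>. \<forall>y\<in>P. le x y \<longrightarrow> y \<in> \<Union>\<K>"
  proof (intro ballI impI)
    fix x y assume "x \<in> \<Union>\<K>" "y \<in> P" "le x y"
    then obtain S where "S \<in> \<K>" "x \<in> S"
      by blast
    with \<K> \<open>y \<in> P\<close> \<open>le x y\<close> have "y \<in> S"
      using scott_open_upward[of P le S x y] by blast
    with \<open>S \<in> \<K>\<close> show "y \<in> \<Union>\<K>"
      by blast
  qed
  fix D s assume D: "D \<subseteq> P \<and> directed_in le D \<and> is_sup_in P le D s \<and> s \<in> \<Union>\<K>"
  then obtain S where "S \<in> \<K>" "s \<in> S"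
    by blast
  with \<K> D have "D \<inter> S \<noteq> {}"
    using scott_open_meets_directed[of P le S D s] by blast
  with \<open>S \<in> \<K>\<close> show "D \<inter> \<Union>\<K> \<noteq> {}"
    by blast
qed

lemma istopology_scott_open: "istopology (scott_open P le)"
  unfolding istopology_def using scott_open_Int scott_open_Union by blast

lemma openin_scott_topology: "openin (scott_topology P le) = scott_open P le"
  unfolding scott_topology_def by (rule topology_inverse'[OF istopology_scott_open])

lemma scott_open_box:
  assumes wf: "well_filtered X" and U: "openin X U"
  shows "scott_open (Kset X) (\<lambda>A B. B \<subseteq> A) (box X U)"
  unfolding scott_open_def
proof (intro conjI allI impI)
  fix \<K> K
  assume \<K>: "\<K> \<subseteq> Kset X \<and> directed_in (\<lambda>A B. B \<subseteq> A) \<K> \<and>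
               is_sup_in (Kset X) (\<lambda>A B. B \<subseteq> A) \<K> K \<and> K \<in> box X U"
  then have "\<Inter>\<K> \<in> Kset X"
    using Kset_Inter_directed[OF wf] by blast
  with \<K> have "K = \<Inter>\<K>"
    using is_sup_in_Kset_iff by blast
  with \<K> have "\<Inter>\<K> \<subseteq> U"
    by (simp add: box_def)
  then obtain K' where "K' \<in> \<K>" "K' \<subseteq> U"
    using well_filteredD[OF wf U] \<K> by blast
  with \<K> show "\<K> \<inter> box X U \<noteq> {}"
    by (auto simp: box_def)
qed (auto simp: box_def)

lemma openin_smyth_power_box: "openin X U \<Longrightarrow> openin (smyth_power X) (box X U)"
  unfolding smyth_power_def by (rule topology_generated_by_Basis) auto

lemma box_topspace: "box X (topspace X) = Kset X"
  by (auto simp: box_def Kset_def compactin_def)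

lemma topspace_smyth_power: "topspace (smyth_power X) = Kset X"
  using box_topspace[of X] unfolding smyth_power_def topology_generated_by_topspace
  by (auto simp: box_def)

lemma openin_smyth_power_imp_box_nbhd:
  assumes "openin (smyth_power X) \<V>" "K \<in> \<V>"
  shows "\<exists>U. openin X U \<and> K \<in> box X U \<and> box X U \<subseteq> \<V>"
proof -
  have "generate_topology_on {box X U | U. openin X U} \<V>"
    using assms(1) unfolding smyth_power_def by (rule openin_topology_generated_by)
  then have "\<forall>K\<in>\<V>. \<exists>U. openin X U \<and> K \<in> box X U \<and> box X U \<subseteq> \<V>"
  proof (induction rule: generate_topology_on.induct)
    case Empty
    then show ?case
      by simp
  next
    case (Int \<V>\<^sub>1 \<V>\<^sub>2)
    show ?case
    proof
      fix K assume "K \<in> \<V>\<^sub>1 \<inter> \<V>\<^sub>2"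
      then have "K \<in> \<V>\<^sub>1" "K \<in> \<V>\<^sub>2"
        by simp_all
      obtain U\<^sub>1 where "openin X U\<^sub>1" "K \<in> box X U\<^sub>1" "box X U\<^sub>1 \<subseteq> \<V>\<^sub>1"
        using Int.IH(1) \<open>K \<in> \<V>\<^sub>1\<close> by blast
      moreover obtain U\<^sub>2 where "openin X U\<^sub>2" "K \<in> box X U\<^sub>2" "box X U\<^sub>2 \<subseteq> \<V>\<^sub>2"
        using Int.IH(2) \<open>K \<in> \<V>\<^sub>2\<close> by blast
      ultimately show "\<exists>U. openin X U \<and> K \<in> box X U \<and> box X U \<subseteq> \<V>\<^sub>1 \<inter> \<V>\<^sub>2"
        by (intro exI[of _ "U\<^sub>1 \<inter> U\<^sub>2"]) (auto simp: box_def)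
    qed
  next
    case (UN \<F>)
    show ?case
    proof
      fix K assume "K \<in> \<Union>\<F>"
      then obtain \<V> where "\<V> \<in> \<F>" "K \<in> \<V>"
        by blast
      then obtain U where "openin X U" "K \<in> box X U" "box X U \<subseteq> \<V>"
        using UN.IH by blast
      with \<open>\<V> \<in> \<F>\<close> show "\<exists>U. openin X U \<and> K \<in> box X U \<and> box X U \<subseteq> \<Union>\<F>"
        by blast
    qed
  next
    case (Basis \<V>)
    then obtain U where "openin X U" "\<V> = box X U"
      by blast
    then show ?case
      by blast
  qed
  with assms(2) show ?thesis
    by blast
qed

lemma first_countable_smyth_power_nbhd_seq:
  assumes fc: "first_countable (smyth_power X)" and K: "K \<in> Kset X"
  obtains U :: "nat \<Rightarrow> 'a set" where "\<And>n. openin X (U n)" "\<And>n. K \<subseteq> U n"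
    "\<And>G. openin X G \<Longrightarrow> K \<subseteq> G \<Longrightarrow> \<exists>N. U N \<subseteq> G"
proof -
  obtain \<B> where "countable \<B>" and \<B>: "\<And>\<V>. \<V> \<in> \<B> \<Longrightarrow> openin (smyth_power X) \<V>"
    and base: "\<And>\<O>. openin (smyth_power X) \<O> \<Longrightarrow> K \<in> \<O> \<Longrightarrow> \<exists>\<V>\<in>\<B>. K \<in> \<V> \<and> \<V> \<subseteq> \<O>"
    using fc K unfolding first_countable_def topspace_smyth_power by metis
  define \<B>\<^sub>K where "\<B>\<^sub>K = {\<V> \<in> \<B>. K \<in> \<V>}"
  have "\<B>\<^sub>K \<noteq> {}"
    using base[OF openin_smyth_power_box[OF openin_topspace]] K by (auto simp: \<B>\<^sub>K_def box_topspace)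
  define b where "b = from_nat_into \<B>\<^sub>K"
  have b: "b n \<in> \<B>" "K \<in> b n" for n
    using from_nat_into[OF \<open>\<B>\<^sub>K \<noteq> {}\<close>] by (auto simp: b_def \<B>\<^sub>K_def)
  have "\<exists>U. openin X U \<and> K \<in> box X U \<and> box X U \<subseteq> b n" for n
    by (rule openin_smyth_power_imp_box_nbhd[OF \<B>[OF b(1)] b(2)])
  then obtain U where U: "\<And>n. openin X (U n)" "\<And>n. K \<in> box X (U n)" "\<And>n. box X (U n) \<subseteq> b n"
    by metis
  show thesis
  proof (rule that[of U])
    show "openin X (U n)" "K \<subseteq> U n" for n
      using U(1,2) by (auto simp: box_def)
    fix G assume "openin X G" "K \<subseteq> G"
    then have "K \<in> box X G"
      using K by (simp add: box_def)
    then obtain \<V> where "\<V> \<in> \<B>\<^sub>K" "\<V> \<subseteq> box X G"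
      using base[OF openin_smyth_power_box[OF \<open>openin X G\<close>]] by (auto simp: \<B>\<^sub>K_def)
    moreover have "countable \<B>\<^sub>K"
      using \<open>countable \<B>\<close> by (simp add: \<B>\<^sub>K_def)
    ultimately obtain N where "b N \<subseteq> box X G"
      using from_nat_into_surj[of \<B>\<^sub>K \<V>] unfolding b_def by blast
    with U(3) have "box X (U N) \<subseteq> box X G"
      by blast
    then show "\<exists>N. U N \<subseteq> G"
      using box_subset_imp_subset U(1) by blast
  qed
qed

lemma nbhd_seq_imp_decseq_nbhd_seq:
  fixes U :: "nat \<Rightarrow> 'a set"
  assumes "\<And>n. openin X (U n)" "\<And>n. K \<subseteq> U n"
    and "\<And>G. openin X G \<Longrightarrow> K \<subseteq> G \<Longrightarrow> \<exists>N. U N \<subseteq> G"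
  obtains W where "\<And>n. openin X (W n)" "\<And>n. K \<subseteq> W n" "decseq W"
    "\<And>G. openin X G \<Longrightarrow> K \<subseteq> G \<Longrightarrow> \<exists>N. W N \<subseteq> G"
proof -
  define W where "W n = \<Inter>(U ` {..n})" for n
  show thesis
  proof (rule that[of W])
    show "openin X (W n)" "K \<subseteq> W n" for n
      using assms(1,2) by (auto simp: W_def)
    show "decseq W"
      by (auto simp: W_def decseq_def)
    fix G assume "openin X G" "K \<subseteq> G"
    then obtain N where "U N \<subseteq> G"
      using assms(3) by blast
    moreover have "W N \<subseteq> U N"
      by (auto simp: W_def)
    ultimately show "\<exists>N. W N \<subseteq> G"
      by blast
  qed
qed

lemma Kset_Un_tails_directed_sup:
  assumes K: "K \<in> Kset X" and C: "\<And>m. C m \<in> Kset X"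
    and conv: "\<And>G. openin X G \<Longrightarrow> K \<subseteq> G \<Longrightarrow> \<forall>\<^sub>F m in sequentially. C m \<subseteq> G"
  defines "L \<equiv> \<lambda>n. K \<union> \<Union>(C ` {n..})"
  shows "range L \<subseteq> Kset X" and "directed_in (\<lambda>A B. B \<subseteq> A) (range L)"
    and "is_sup_in (Kset X) (\<lambda>A B. B \<subseteq> A) (range L) K"
proof -
  have "L n \<in> Kset X" for n
  proof -
    have "compactin X (L n)"
      unfolding L_def
    proof (rule compactin_Un_tails)
      show "compactin X K" "compactin X (C m)" for m
        using K C by (simp_all add: Kset_def)
    qed (fact conv)
    moreover have "saturated X (\<Union>(insert K (C ` {n..})))"
      using K C by (intro saturated_Union) (auto simp: Kset_def)
    then have "saturated X (L n)"
      by (simp add: L_def)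
    moreover have "L n \<noteq> {}"
      using K by (simp add: L_def Kset_def)
    ultimately show ?thesis
      by (simp add: Kset_def)
  qed
  then show "range L \<subseteq> Kset X"
    by blast
  show "directed_in (\<lambda>A B. B \<subseteq> A) (range L)"
    unfolding directed_in_def
  proof (intro conjI ballI)
    fix A B assume "A \<in> range L" "B \<in> range L"
    then obtain i j where "A = L i" "B = L j"
      by blast
    then show "\<exists>C\<in>range L. C \<subseteq> A \<and> C \<subseteq> B"
      by (intro bexI[of _ "L (max i j)"]) (auto simp: L_def)
  qed simp
  have "\<Inter>(range L) = K"
    unfolding L_def using Inter_Un_tails_eq_saturated[of X K C] K conv by (simp add: Kset_def)
  with K show "is_sup_in (Kset X) (\<lambda>A B. B \<subseteq> A) (range L) K"
    by (simp add: is_sup_in_Kset_iff)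
qed

lemma scott_open_imp_box_nbhd:
  assumes fc: "first_countable (smyth_power X)"
    and \<V>: "scott_open (Kset X) (\<lambda>A B. B \<subseteq> A) \<V>" and "K \<in> \<V>"
  shows "\<exists>U. openin X U \<and> K \<subseteq> U \<and> box X U \<subseteq> \<V>"
proof (rule ccontr)
  assume no_box: "\<not> ?thesis"
  have K: "K \<in> Kset X"
    using scott_open_subset[OF \<V>] \<open>K \<in> \<V>\<close> by blast
  obtain W where W: "\<And>n. openin X (W n)" "\<And>n. K \<subseteq> W n" "decseq W"
    and W_base: "\<And>G. openin X G \<Longrightarrow> K \<subseteq> G \<Longrightarrow> \<exists>N. W N \<subseteq> G"
    using first_countable_smyth_power_nbhd_seq[OF fc K] nbhd_seq_imp_decseq_nbhd_seq by metis
  have "\<not> box X (W n) \<subseteq> \<V>" for n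
    using no_box W(1,2) by blast
  then have "\<exists>C. C \<in> box X (W n) \<and> C \<notin> \<V>" for n
    by blast
  then obtain C where C: "\<And>n. C n \<in> box X (W n)" "\<And>n. C n \<notin> \<V>"
    by metis
  have C_Kset: "C n \<in> Kset X" for n
    using C(1) by (simp add: box_def)
  have conv: "\<forall>\<^sub>F m in sequentially. C m \<subseteq> G" if G: "openin X G" "K \<subseteq> G" for G
  proof -
    obtain N where "W N \<subseteq> G"
      using W_base[OF G] by blast
    moreover have "C m \<subseteq> W N" if "m \<ge> N" for m
      using C(1)[of m] decseqD[OF \<open>decseq W\<close> that] by (auto simp: box_def)
    ultimately have "\<forall>m\<ge>N. C m \<subseteq> G"
      by blast
    then show ?thesis
      unfolding eventually_sequentially by blast
  qed
  obtain n where "K \<union> \<Union>(C ` {n..}) \<in> \<V>"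
    using scott_open_meets_directed[OF \<V> Kset_Un_tails_directed_sup[OF K C_Kset conv] \<open>K \<in> \<V>\<close>]
    by blast
  moreover have "C n \<subseteq> K \<union> \<Union>(C ` {n..})"
    by auto
  ultimately have "C n \<in> \<V>"
    by (rule scott_open_upward[OF \<V> _ C_Kset])
  with C(2) show False
    by blast
qed

theorem mainTheorem2:
  fixes X :: "'a topology"
  assumes "t0_space X"
    and "well_filtered X"
    and "first_countable (smyth_power X)"
  shows "smyth_power X = scott_topology (Kset X) (\<lambda>A B. B \<subseteq> A)"
  unfolding topology_eq openin_scott_topology
proof (intro allI iffI)
  fix \<V> assume "openin (smyth_power X) \<V>"
  then have generated: "generate_topology_on {box X U | U. openin X U} \<V>"
    unfolding smyth_power_def by (rule openin_topology_generated_by)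
  show "scott_open (Kset X) (\<lambda>A B. B \<subseteq> A) \<V>"
    by (rule generate_topology_on_coarsest[OF istopology_scott_open _ generated])
      (use scott_open_box[OF assms(2)] in blast)
next
  fix \<V> assume \<V>: "scott_open (Kset X) (\<lambda>A B. B \<subseteq> A) \<V>"
  have "\<exists>\<O>. openin (smyth_power X) \<O> \<and> K \<in> \<O> \<and> \<O> \<subseteq> \<V>" if "K \<in> \<V>" for K
  proof -
    obtain U where "openin X U" "K \<subseteq> U" "box X U \<subseteq> \<V>"
      using scott_open_imp_box_nbhd[OF assms(3) \<V> \<open>K \<in> \<V>\<close>] by blast
    moreover have "K \<in> Kset X"
      using scott_open_subset[OF \<V>] \<open>K \<in> \<V>\<close> by blast
    ultimately show ?thesis
      using openin_smyth_power_box[of X U] unfolding box_def by blast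
  qed
  then show "openin (smyth_power X) \<V>"
    by (intro openin_subopen[THEN iffD2]) blast
qed

end
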